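(* For any three continuous functions $f_1,f_2,f_3:\mathrm{SO}(3)\to S^3$, there exists a rotation $R\in\mathrm{SO}(3)$ such that $d(R,\mathbf{R}_Q(f_i(R)))=\pi$ for all $i\in\{1,2,3\}$.
   Context: $S^3$ is the set of unit quaternions, identifying $w+x\mathbf{i}+y\mathbf{j}+z\mathbf{k}$ with $(w,x,y,z)$. $\mathbf{R}_Q:S^3\to\mathrm{SO}(3)$ is the standard conversion $$\mathbf{R}_Q(w,x,y,z)=\begin{bmatrix}1-2y^2-2z^2 & 2(xy-zw) & 2(xz+yw)\\ 2(xy+zw) & 1-2x^2-2z^2 & 2(yz-xw)\\ 2(xz-yw) & 2(yz+xw) & 1-2x^2-2y^2\end{bmatrix}.$$ For $R_1,R_2\in\mathrm{SO}(3)$, $d(R_1,R_2)=\cos^{-1}\frac{\mathrm{tr}(R_2R_1^{-1})-1}{2}$ is the angle of the rotation $R_2R_1^{-1}$. *)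

theory Defs
  imports "HOL-Analysis.Analysis"
begin

definition SO3 :: "(real^3^3) set" where
  "SO3 = {R. rotation_matrix R}"

text \<open>Unit quaternions w + x i + y j + z k, identified with (w,x,y,z) in R^4,
  components indexed 1,2,3,4.\<close>
definition S3 :: "(real^4) set" where
  "S3 = sphere 0 1"

definition RQ :: "real^4 \<Rightarrow> real^3^3" where
  "RQ q = (let w = q$1; x = q$2; y = q$3; z = q$4 in
     vector [vector [1 - 2*y^2 - 2*z^2, 2*(x*y - z*w), 2*(x*z + y*w)],
             vector [2*(x*y + z*w), 1 - 2*x^2 - 2*z^2, 2*(y*z - x*w)],
             vector [2*(x*z - y*w), 2*(y*z + x*w), 1 - 2*x^2 - 2*y^2]])"

text \<open>Angle of the rotation R2 R1^{-1}.\<close>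
definition rot_dist :: "real^3^3 \<Rightarrow> real^3^3 \<Rightarrow> real" where
  "rot_dist R1 R2 = arccos ((trace (R2 ** matrix_inv R1) - 1) / 2)"

end

theory Submission
  imports Defs "HOL-Homology.Invariance_of_Domain"
begin

(* Two unit quaternions p, q give rotations at angle pi from each other when they are
   orthogonal, because tr (R_Q q R_Q p^T) = 4 (p . q)^2 - 1. Since R_Q (-p) = R_Q p, the map
   p |-> (p . f_i (R_Q p)) for i = 1, 2, 3 is an odd continuous map from S^3 to R^3; by
   Borsuk-Ulam it has a zero p, and R = R_Q p is the required rotation.

   Borsuk-Ulam for maps S^3 -> R^3 is reduced to the mod 2 degree step for odd maps of the
   library: an odd self-map of S^n that preserves the flag S^0, S^1, ..., S^n and fixes S^0 has
   odd degree, so it is surjective. An odd map without zeros can be replaced by a smooth one,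
   then perturbed near the circle x3 = x4 = 0 so that it maps this circle into the plane y3 = 0;
   after a rotation its normalization preserves the flag but misses a pole of S^3. *)

section \<open>Odd self-maps of spheres preserving a flag\<close>

lemma topspace_nsphere_mono:
  assumes "k \<le> n" shows "topspace (nsphere k) \<subseteq> topspace (nsphere n)"
proof
  fix x assume x: "x \<in> topspace (nsphere k)"
  then have "(\<Sum>i\<le>n. (x i)^2) = (\<Sum>i\<le>k. (x i)^2)"
    using assms by (intro sum.mono_neutral_right) (auto simp: nsphere)
  then show "x \<in> topspace (nsphere n)"
    using x assms by (auto simp: nsphere)
qed

lemma nsphere_eq_subtopology:
  assumes "k \<le> n" shows "nsphere k = subtopology (nsphere n) (topspace (nsphere k))"
proof -
  have "topspace (nsphere k) \<inter> topspace (nsphere n) = topspace (nsphere k)"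
    using topspace_nsphere_mono [OF assms] by blast
  then show ?thesis
    by (simp add: nsphere [of n] subtopology_subtopology) (simp add: nsphere Int_commute)
qed

lemma continuous_map_nsphere_restrict:
  assumes "continuous_map (nsphere n) (nsphere n) f" "k \<le> n"
    and "f \<in> topspace (nsphere k) \<rightarrow> topspace (nsphere k)"
  shows "continuous_map (nsphere k) (nsphere k) f"
proof -
  let ?Sk = "subtopology (nsphere n) (topspace (nsphere k))"
  have "continuous_map ?Sk ?Sk f"
    using continuous_map_from_subtopology [OF assms(1)] assms(3)
    by (auto simp: continuous_map_in_subtopology)
  then show ?thesis
    by (simp only: nsphere_eq_subtopology [OF assms(2), symmetric])
qed

lemma odd_Brouwer_degree2_flag_preserving:
  assumes "continuous_map (nsphere n) (nsphere n) f"
    and "\<And>x. x \<in> topspace (nsphere n) \<Longrightarrow> f (\<lambda>i. - x i) = (\<lambda>i. - f x i)"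
    and "\<And>k. k \<le> n \<Longrightarrow> f \<in> topspace (nsphere k) \<rightarrow> topspace (nsphere k)"
    and "\<And>x. x \<in> topspace (nsphere 0) \<Longrightarrow> f x = x"
  shows "odd (Brouwer_degree2 n f)"
  using assms
proof (induction n)
  case 0
  then have "Brouwer_degree2 0 f = Brouwer_degree2 0 id"
    by (intro Brouwer_degree2_eq) simp
  then show ?case by simp
next
  case (Suc n)
  have restrict: "f \<in> topspace (nsphere (Suc n - Suc 0)) \<rightarrow> topspace (nsphere (Suc n - Suc 0))"
    by (rule Suc.prems(3)) simp
  then have restrict_n: "f \<in> topspace (nsphere n) \<rightarrow> topspace (nsphere n)"
    by (simp only: diff_Suc_Suc minus_nat.diff_0)
  have "odd (Brouwer_degree2 n f)"
  proof (rule Suc.IH)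
    show "continuous_map (nsphere n) (nsphere n) f"
      using continuous_map_nsphere_restrict [OF Suc.prems(1) _ restrict_n] by simp
    show "f (\<lambda>i. - x i) = (\<lambda>i. - f x i)" if "x \<in> topspace (nsphere n)" for x
      using that topspace_nsphere_mono [of n "Suc n"] by (intro Suc.prems(2)) auto
    show "f \<in> topspace (nsphere k) \<rightarrow> topspace (nsphere k)" if "k \<le> n" for k
      using that by (intro Suc.prems(3)) simp
    show "f x = x" if "x \<in> topspace (nsphere 0)" for x
      using that by (rule Suc.prems(4))
  qed
  moreover have "(f \<circ> (\<lambda>x i. - x i)) u = ((\<lambda>x i. - x i) \<circ> f) u"
    if "u \<in> topspace (nsphere (Suc n))" for u
    using Suc.prems(2) [OF that] by (simp add: o_def)
  then have "even (Brouwer_degree2 (Suc n) f - Brouwer_degree2 (Suc n - Suc 0) f)"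
    by (rule Borsuk_odd_mapping_degree_step [OF Suc.prems(1) _ restrict])
  ultimately show ?case
    by (simp only: diff_Suc_Suc minus_nat.diff_0 even_diff even_add) blast
qed

corollary flag_preserving_odd_map_surjective:
  assumes "continuous_map (nsphere n) (nsphere n) f"
    and "\<And>x. x \<in> topspace (nsphere n) \<Longrightarrow> f (\<lambda>i. - x i) = (\<lambda>i. - f x i)"
    and "\<And>k. k \<le> n \<Longrightarrow> f \<in> topspace (nsphere k) \<rightarrow> topspace (nsphere k)"
    and "\<And>x. x \<in> topspace (nsphere 0) \<Longrightarrow> f x = x"
  shows "f ` topspace (nsphere n) = topspace (nsphere n)"
proof (rule ccontr)
  assume "f ` topspace (nsphere n) \<noteq> topspace (nsphere n)"
  then have "Brouwer_degree2 n f = 0"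
    by (rule Brouwer_degree2_nonsurjective [OF assms(1)])
  with odd_Brouwer_degree2_flag_preserving [OF assms] show False
    by simp
qed

section \<open>The Borsuk-Ulam theorem for maps from \<open>S\<^sup>3\<close> to \<open>\<real>\<^sup>3\<close>\<close>

lemma norm_eq_1_vec4: "norm (q::real^4) = 1 \<longleftrightarrow> (q$1)^2 + (q$2)^2 + (q$3)^2 + (q$4)^2 = 1"
  by (simp add: norm_eq_1 inner_vec_def sum_4 power2_eq_square)

lemma continuous_map_vec_lambda:
  assumes "\<And>j. continuous_map X euclideanreal (g j)"
  shows "continuous_map X euclidean (\<lambda>x. (\<chi> j. g j x) :: real^'n)"
  using assms unfolding continuous_map_atin by (auto intro: tendsto_vec_lambda)

definition vec4_of_seq :: "(nat \<Rightarrow> real) \<Rightarrow> real^4" where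
  "vec4_of_seq x = (\<chi> j. if j = 1 then x 0 else if j = 2 then x 1 else if j = 3 then x 2 else x 3)"

definition seq_of_vec3 :: "real^3 \<Rightarrow> nat \<Rightarrow> real" where
  "seq_of_vec3 y i = (if i = 0 then y$1 else if i = 1 then y$2 else if i = 2 then y$3 else 0)"

lemma vec4_of_seq_nth [simp]:
  "vec4_of_seq x $ 1 = x 0" "vec4_of_seq x $ 2 = x 1" "vec4_of_seq x $ 3 = x 2" "vec4_of_seq x $ 4 = x 3"
  by (simp_all add: vec4_of_seq_def)

lemma vec4_of_seq_uminus: "vec4_of_seq (\<lambda>i. - x i) = - vec4_of_seq x"
  by (simp add: vec_eq_iff forall_4)

lemma seq_of_vec3_uminus: "seq_of_vec3 (- y) = (\<lambda>i. - seq_of_vec3 y i)"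
  by (simp add: seq_of_vec3_def fun_eq_iff)

lemma continuous_map_vec4_of_seq: "continuous_map (powertop_real UNIV) euclidean vec4_of_seq"
  unfolding vec4_of_seq_def
proof (rule continuous_map_vec_lambda)
  fix j :: 4
  show "continuous_map (powertop_real UNIV) euclideanreal
      (\<lambda>x::nat \<Rightarrow> real. if j = 1 then x 0 else if j = 2 then x 1 else if j = 3 then x 2 else x 3)"
    using continuous_map_product_projection [OF UNIV_I, of "\<lambda>_. euclideanreal"]
    by (cases "j = 1"; cases "j = 2"; cases "j = 3"; simp)
qed

lemma continuous_map_seq_of_vec3: "continuous_map euclidean (powertop_real UNIV) seq_of_vec3"
  unfolding continuous_map_componentwise_UNIV
proof
  fix i :: nat
  show "continuous_map euclidean euclideanreal (\<lambda>y. seq_of_vec3 y i)"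
    by (cases "i = 0"; cases "i = 1"; cases "i = 2"; simp add: seq_of_vec3_def; intro continuous_intros)
qed

lemma vec4_of_seq_in_sphere:
  "x \<in> topspace (nsphere 3) \<Longrightarrow> vec4_of_seq x \<in> sphere 0 1"
  by (simp add: nsphere norm_eq_1_vec4 numeral_3_eq_3 numeral_2_eq_2 add.assoc power2_eq_square)

lemma seq_of_vec3_in_nsphere:
  assumes "norm y = 1"
  shows "seq_of_vec3 y \<in> topspace (nsphere 2)"
    and "y $ 3 = 0 \<Longrightarrow> seq_of_vec3 y \<in> topspace (nsphere 1)"
  using assms by (simp_all add: nsphere norm_eq_1 inner_vec_def sum_3 seq_of_vec3_def
      numeral_2_eq_2 power2_eq_square)

lemma continuous_map_into_nsphere:
  assumes "continuous_map X (powertop_real UNIV) f" "f \<in> topspace X \<rightarrow> topspace (nsphere n)"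
  shows "continuous_map X (nsphere n) f"
  using assms by (auto simp: nsphere continuous_map_in_subtopology)

definition nsphere_map_of :: "(real^4 \<Rightarrow> real^3) \<Rightarrow> (nat \<Rightarrow> real) \<Rightarrow> nat \<Rightarrow> real" where
  "nsphere_map_of N x = seq_of_vec3 (N (vec4_of_seq x))"

lemma continuous_map_nsphere_map_of:
  assumes cont: "continuous_on (sphere 0 1) N" and sphere: "N ` sphere 0 1 \<subseteq> sphere 0 1"
  shows "continuous_map (nsphere 3) (nsphere 3) (nsphere_map_of N)"
proof (rule continuous_map_into_nsphere)
  have vec4: "continuous_map (nsphere 3) (top_of_set (sphere 0 1)) vec4_of_seq"
    using continuous_map_from_subtopology [OF continuous_map_vec4_of_seq] vec4_of_seq_in_sphere
    by (auto simp: nsphere [of 3] continuous_map_in_subtopology)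
  have "continuous_map (top_of_set (sphere 0 1)) euclidean N"
    using cont by simp
  then show "continuous_map (nsphere 3) (powertop_real UNIV) (nsphere_map_of N)"
    using continuous_map_compose [OF continuous_map_compose [OF vec4] continuous_map_seq_of_vec3]
    by (simp add: nsphere_map_of_def [abs_def] o_def)
  have "topspace (nsphere 2) \<subseteq> topspace (nsphere 3)"
    by (rule topspace_nsphere_mono) simp
  then show "nsphere_map_of N \<in> topspace (nsphere 3) \<rightarrow> topspace (nsphere 3)"
    using sphere vec4_of_seq_in_sphere seq_of_vec3_in_nsphere(1)
    by (fastforce simp: nsphere_map_of_def)
qed

lemma nsphere_map_of_odd:
  assumes "\<And>y. y \<in> sphere 0 1 \<Longrightarrow> N (-y) = - N y" and "x \<in> topspace (nsphere 3)"
  shows "nsphere_map_of N (\<lambda>i. - x i) = (\<lambda>i. - nsphere_map_of N x i)"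
  using assms(1) [OF vec4_of_seq_in_sphere [OF assms(2)]]
  by (simp add: nsphere_map_of_def vec4_of_seq_uminus seq_of_vec3_uminus)

lemma nsphere_map_of_flag:
  assumes sphere: "N ` sphere 0 1 \<subseteq> sphere 0 1"
    and circle: "\<And>y. y \<in> sphere 0 1 \<Longrightarrow> y$3 = 0 \<Longrightarrow> y$4 = 0 \<Longrightarrow> N y $ 3 = 0"
    and k: "1 \<le> k" "k \<le> 3"
  shows "nsphere_map_of N \<in> topspace (nsphere k) \<rightarrow> topspace (nsphere k)"
proof -
  have S2: "nsphere_map_of N x \<in> topspace (nsphere 2)" if "x \<in> topspace (nsphere 3)" for x
  proof -
    have "N (vec4_of_seq x) \<in> sphere 0 1"
      using sphere vec4_of_seq_in_sphere [OF that] by blast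
    then show ?thesis
      by (simp add: nsphere_map_of_def seq_of_vec3_in_nsphere(1))
  qed
  have S1: "nsphere_map_of N x \<in> topspace (nsphere 1)" if "x \<in> topspace (nsphere 1)" for x
  proof -
    have x: "vec4_of_seq x \<in> sphere 0 1"
      using that topspace_nsphere_mono [of 1 3] vec4_of_seq_in_sphere by auto
    have "x 2 = 0" "x 3 = 0"
      using that by (auto simp: nsphere)
    then have "N (vec4_of_seq x) $ 3 = 0"
      using circle [OF x] by simp
    moreover have "N (vec4_of_seq x) \<in> sphere 0 1"
      using sphere x by blast
    ultimately show ?thesis
      unfolding nsphere_map_of_def by (intro seq_of_vec3_in_nsphere(2)) auto
  qed
  have "k = 1 \<or> k = 2 \<or> k = 3"
    using k by arith
  then show ?thesis
    using S1 S2 topspace_nsphere_mono [of 2 3] by auto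
qed

lemma nsphere_map_of_eq_on_nsphere0:
  assumes odd: "\<And>y. y \<in> sphere 0 1 \<Longrightarrow> N (-y) = - N y"
    and e1: "N (axis 1 1) = axis 1 1"
    and x: "x \<in> topspace (nsphere 0)"
  shows "nsphere_map_of N x = x"
proof -
  have x0: "x 0 = 1 \<or> x 0 = -1" and x_0: "\<And>i. i > 0 \<Longrightarrow> x i = 0"
    using x by (auto simp: nsphere power2_eq_1_iff)
  then have "vec4_of_seq x = x 0 *\<^sub>R axis 1 1"
    by (simp add: vec_eq_iff forall_4 axis_def)
  moreover have "N (x 0 *\<^sub>R axis 1 1) = x 0 *\<^sub>R axis 1 1"
    using x0 e1 odd [of "axis 1 1"] by auto
  ultimately show ?thesis
    using x_0 by (auto simp: nsphere_map_of_def seq_of_vec3_def axis_def fun_eq_iff)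
qed

text \<open>Transported to \<^term>\<open>nsphere 3\<close>, such an \<open>N\<close> would be an odd flag-preserving
  self-map of \<open>S\<^sup>3\<close> that misses the pole \<open>e\<^sub>4\<close>.\<close>
lemma odd_sphere_map_flat_on_circle_absurd:
  fixes N :: "real^4 \<Rightarrow> real^3"
  assumes cont: "continuous_on (sphere 0 1) N"
    and sphere: "N ` sphere 0 1 \<subseteq> sphere 0 1"
    and odd: "\<And>y. y \<in> sphere 0 1 \<Longrightarrow> N (-y) = - N y"
    and circle: "\<And>y. y \<in> sphere 0 1 \<Longrightarrow> y$3 = 0 \<Longrightarrow> y$4 = 0 \<Longrightarrow> N y $ 3 = 0"
    and e1: "N (axis 1 1) = axis 1 1"
  shows False
proof -
  have "nsphere_map_of N ` topspace (nsphere 3) = topspace (nsphere 3)"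
  proof (rule flag_preserving_odd_map_surjective)
    show "continuous_map (nsphere 3) (nsphere 3) (nsphere_map_of N)"
      using cont sphere by (rule continuous_map_nsphere_map_of)
    show "nsphere_map_of N (\<lambda>i. - x i) = (\<lambda>i. - nsphere_map_of N x i)"
      if "x \<in> topspace (nsphere 3)" for x
      using odd that by (rule nsphere_map_of_odd)
    show id0: "nsphere_map_of N x = x" if "x \<in> topspace (nsphere 0)" for x
      using odd e1 that by (rule nsphere_map_of_eq_on_nsphere0)
    show "nsphere_map_of N \<in> topspace (nsphere k) \<rightarrow> topspace (nsphere k)" if "k \<le> 3" for k
    proof (cases "k = 0")
      case True
      then show ?thesis
        using id0 by (simp add: Pi_iff)
    next
      case False
      then have "1 \<le> k"
        by simp
      with that show ?thesis
        using nsphere_map_of_flag [OF sphere circle] by blast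
    qed
  qed
  moreover have "(\<lambda>i. if i = 3 then 1 else 0) \<in> topspace (nsphere 3)"
    by (simp add: nsphere numeral_3_eq_3)
  ultimately obtain x where "nsphere_map_of N x = (\<lambda>i. if i = 3 then 1 else 0)"
    by (metis (no_types, lifting) imageE)
  then have "nsphere_map_of N x 3 = 1"
    by simp
  then show False
    by (simp add: nsphere_map_of_def seq_of_vec3_def)
qed

text \<open>For \<open>a\<close> in the plane \<open>y\<^sub>3 = 0\<close>, \<open>align_axis1 a\<close> is the rotation about the third axis
  that turns \<open>a\<close> onto the positive first axis, scaled by the length of \<open>a\<close>.\<close>
definition align_axis1 :: "real^3 \<Rightarrow> real^3 \<Rightarrow> real^3" where
  "align_axis1 a y = vector [a$1 * y$1 + a$2 * y$2, a$1 * y$2 - a$2 * y$1, y$3]"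

lemma linear_align_axis1: "linear (align_axis1 a)"
  by (intro linearI) (simp_all add: align_axis1_def vec_eq_iff forall_3 algebra_simps)

lemma align_axis1_nth3 [simp]: "align_axis1 a y $ 3 = y $ 3"
  by (simp add: align_axis1_def)

lemma align_axis1_self:
  "a $ 3 = 0 \<Longrightarrow> align_axis1 a a = ((a$1)^2 + (a$2)^2) *\<^sub>R axis 1 1"
  by (simp add: align_axis1_def vec_eq_iff forall_3 axis_def power2_eq_square mult.commute)

lemma align_axis1_eq_0_iff:
  assumes "(a$1)^2 + (a$2)^2 > 0"
  shows "align_axis1 a y = 0 \<longleftrightarrow> y = 0"
proof
  assume "align_axis1 a y = 0"
  then have h: "a$1 * y$1 + a$2 * y$2 = 0" "a$1 * y$2 - a$2 * y$1 = 0" "y$3 = 0"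
    by (simp_all add: align_axis1_def vec_eq_iff forall_3)
  have "((a$1)^2 + (a$2)^2) * y$1 = a$1 * (a$1 * y$1 + a$2 * y$2) - a$2 * (a$1 * y$2 - a$2 * y$1)"
    "((a$1)^2 + (a$2)^2) * y$2 = a$2 * (a$1 * y$1 + a$2 * y$2) + a$1 * (a$1 * y$2 - a$2 * y$1)"
    by (simp_all add: algebra_simps power2_eq_square)
  then have "y$1 = 0" "y$2 = 0"
    using h assms by auto
  with h(3) show "y = 0"
    by (simp add: vec_eq_iff forall_3)
qed (simp add: align_axis1_def vec_eq_iff forall_3)

lemma Borsuk_Ulam_flat_on_circle:
  fixes G :: "real^4 \<Rightarrow> real^3"
  assumes cont: "continuous_on (sphere 0 1) G"
    and odd: "\<And>x. x \<in> sphere 0 1 \<Longrightarrow> G (-x) = - G x"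
    and circle: "\<And>x. x \<in> sphere 0 1 \<Longrightarrow> x$3 = 0 \<Longrightarrow> x$4 = 0 \<Longrightarrow> G x $ 3 = 0"
  shows "\<exists>x\<in>sphere 0 1. G x = 0"
proof (rule ccontr)
  assume no_zero: "\<not> ?thesis"
  define a where "a = G (axis 1 1)"
  have a3: "a $ 3 = 0"
    unfolding a_def by (rule circle) (simp, simp_all add: axis_def)
  have "a \<noteq> 0"
    using no_zero by (auto simp: a_def)
  with a3 have a12: "(a$1)^2 + (a$2)^2 > 0"
    by (auto simp: vec_eq_iff forall_3 add_pos_nonneg add_nonneg_pos)
  define N where "N x = sgn (align_axis1 a (G x))" for x
  have nz: "align_axis1 a (G x) \<noteq> 0" if "x \<in> sphere 0 1" for x
    using that no_zero align_axis1_eq_0_iff [OF a12] by auto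
  show False
  proof (rule odd_sphere_map_flat_on_circle_absurd)
    have "continuous_on UNIV (align_axis1 a)"
      using linear_align_axis1 by (simp add: linear_continuous_on linear_conv_bounded_linear)
    then show "continuous_on (sphere 0 1) N"
      unfolding N_def using nz continuous_on_compose2 [OF _ cont]
      by (intro continuous_on_sgn) auto
    show "N ` sphere 0 1 \<subseteq> sphere 0 1"
      using nz by (auto simp: N_def norm_sgn)
    show "N (-x) = - N x" if "x \<in> sphere 0 1" for x
      using odd [OF that] linear_align_axis1 by (simp add: N_def linear_neg sgn_minus)
    show "N x $ 3 = 0" if "x \<in> sphere 0 1" "x$3 = 0" "x$4 = 0" for x
      using circle [OF that] by (simp add: N_def sgn_div_norm)
    have "(a$1)^2 + (a$2)^2 \<noteq> 0"
      using a12 by linarith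
    then show "N (axis 1 1) = axis 1 1"
      using a3 by (simp add: N_def align_axis1_self sgn_scaleR sgn_div_norm flip: a_def)
  qed
qed

text \<open>The cone is the image of the smooth map \<open>(s, \<theta>) \<mapsto> s P(cos \<theta>, sin \<theta>, 0, 0)\<close> of the plane.\<close>
lemma negligible_cone_over_circle_image:
  fixes P :: "real^4 \<Rightarrow> real^3"
  assumes diff: "\<And>x. P differentiable (at x)"
  shows "negligible {t *\<^sub>R P x | t x. x \<in> sphere 0 1 \<and> x$3 = 0 \<and> x$4 = 0}"
proof (rule negligible_subset)
  define c where "c \<theta> = cos \<theta> *\<^sub>R axis 1 1 + sin \<theta> *\<^sub>R (axis 2 1 :: real^4)" for \<theta>
  define K where "K z = fst z *\<^sub>R P (c (snd z))" for z :: "real \<times> real"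
  have "K differentiable (at z)" for z
  proof -
    have "cos differentiable (at \<theta>)" "sin differentiable (at \<theta>)" for \<theta> :: real
      unfolding real_differentiable_def by (auto intro: DERIV_cos DERIV_sin)
    then have diff_c: "c differentiable (at \<theta>)" for \<theta>
      unfolding c_def by (intro differentiable_add differentiable_scaleR differentiable_const)
    have "snd differentiable (at z)"
      by (rule bounded_linear_imp_differentiable [OF bounded_linear_snd])
    then have "(P \<circ> (c \<circ> snd)) differentiable (at z)"
      by (intro differentiable_chain_at diff_c diff)
    then have "(\<lambda>z. P (c (snd z))) differentiable (at z)"
      by (simp add: o_def)
    then show ?thesis
      unfolding K_def
      by (intro differentiable_scaleR bounded_linear_imp_differentiable [OF bounded_linear_fst])
  qed
  then show "negligible (range K)"
    by (intro negligible_differentiable_image_lowdim) (simp_all add: differentiable_at_imp_differentiable_on)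
  show "{t *\<^sub>R P x | t x. x \<in> sphere 0 1 \<and> x$3 = 0 \<and> x$4 = 0} \<subseteq> range K"
  proof
    fix y
    assume "y \<in> {t *\<^sub>R P x | t x. x \<in> sphere 0 1 \<and> x$3 = 0 \<and> x$4 = 0}"
    then obtain t x where y: "y = t *\<^sub>R P x" and x: "x \<in> sphere 0 1" "x$3 = 0" "x$4 = 0"
      by blast
    then have "(x$1)^2 + (x$2)^2 = 1"
      by (simp add: norm_eq_1_vec4)
    then obtain \<theta> where "x$1 = cos \<theta>" "x$2 = sin \<theta>"
      by (rule sincos_total_2pi)
    with x have x_eq: "x = c \<theta>"
      by (simp add: c_def vec_eq_iff forall_4 axis_def)
    have "y = K (t, \<theta>)"
      by (simp add: y K_def flip: x_eq)
    then show "y \<in> range K"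
      by simp
  qed
qed

lemma exists_direction_avoiding_circle_image:
  fixes P :: "real^4 \<Rightarrow> real^3"
  assumes diff: "\<And>x. P differentiable (at x)"
    and nz: "\<And>x. x \<in> sphere 0 1 \<Longrightarrow> x$3 = 0 \<Longrightarrow> x$4 = 0 \<Longrightarrow> P x \<noteq> 0"
  obtains v where "v $ 3 \<noteq> 0"
    and "\<And>x t. x \<in> sphere 0 1 \<Longrightarrow> x$3 = 0 \<Longrightarrow> x$4 = 0 \<Longrightarrow> P x \<noteq> t *\<^sub>R v"
proof -
  let ?C = "{t *\<^sub>R P x | t x. x \<in> sphere 0 1 \<and> x$3 = 0 \<and> x$4 = 0}"
  have "negligible (?C \<union> {v. v $ 3 = 0})"
    using negligible_cone_over_circle_image [OF diff] negligible_standard_hyperplane_cart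
    by (rule negligible_Un)
  then have "?C \<union> {v. v $ 3 = 0} \<noteq> UNIV"
    by (metis non_negligible_UNIV)
  then obtain v where v: "v \<notin> ?C" "v $ 3 \<noteq> 0"
    by blast
  have "P x \<noteq> t *\<^sub>R v" if x: "x \<in> sphere 0 1" "x$3 = 0" "x$4 = 0" for x t
  proof
    assume Px: "P x = t *\<^sub>R v"
    with nz [OF x] have "t \<noteq> 0"
      by auto
    with Px have "v = (1/t) *\<^sub>R P x"
      by simp
    with x v(1) show False
      by blast
  qed
  with v(2) show thesis
    by (rule that)
qed

lemma neighbourhood_of_circle_avoiding_line:
  fixes P :: "real^4 \<Rightarrow> real^3"
  assumes cont: "continuous_on (sphere 0 1) P"
    and v: "v \<noteq> 0"
    and avoid: "\<And>x t. x \<in> sphere 0 1 \<Longrightarrow> x$3 = 0 \<Longrightarrow> x$4 = 0 \<Longrightarrow> P x \<noteq> t *\<^sub>R v"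
  obtains \<mu> where "\<mu> > 0"
    and "\<And>x t. x \<in> sphere 0 1 \<Longrightarrow> (x$3)^2 + (x$4)^2 < \<mu> \<Longrightarrow> P x \<noteq> t *\<^sub>R v"
proof -
  define r where "r x = P x - ((P x \<bullet> v) / (v \<bullet> v)) *\<^sub>R v" for x
  have r_eq_0: "r x = 0 \<longleftrightarrow> (\<exists>t. P x = t *\<^sub>R v)" for x
    using v by (auto simp: r_def)
  define m where "m x = (norm (r x))^2 + ((x$3)^2 + (x$4)^2)" for x
  have m_pos: "m x > 0" if "x \<in> sphere 0 1" for x
  proof (cases "x$3 = 0 \<and> x$4 = 0")
    case True
    then have "r x \<noteq> 0"
      using avoid [OF that] r_eq_0 by blast
    with True show ?thesis
      by (simp add: m_def)
  next
    case False
    then show ?thesis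
      by (auto simp: m_def add_pos_nonneg add_nonneg_pos)
  qed
  have "continuous_on (sphere 0 1) m"
    unfolding m_def r_def using v by (intro continuous_intros cont) auto
  moreover have "sphere (0::real^4) 1 \<noteq> {}"
    by simp
  ultimately obtain x0 where x0: "x0 \<in> sphere 0 1" "\<And>y. y \<in> sphere 0 1 \<Longrightarrow> m x0 \<le> m y"
    using continuous_attains_inf [OF compact_sphere] by blast
  show thesis
  proof (rule that)
    show "m x0 > 0"
      using m_pos x0(1) .
    show "P x \<noteq> t *\<^sub>R v" if "x \<in> sphere 0 1" "(x$3)^2 + (x$4)^2 < m x0" for x t
    proof -
      have "r x \<noteq> 0"
        using that x0(2) [OF that(1)] by (auto simp: m_def)
      then show ?thesis
        using r_eq_0 by blast
    qed
  qed
qed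

text \<open>Subtracting a multiple of \<open>v\<close> kills the third coordinate on the circle; the cut-off \<open>\<phi>\<close>
  confines this correction to points where \<open>P\<close> is not parallel to \<open>v\<close>, so no zeros are
  created.\<close>
lemma Borsuk_Ulam_avoiding_line:
  fixes P :: "real^4 \<Rightarrow> real^3"
  assumes cont: "continuous_on (sphere 0 1) P"
    and odd: "\<And>x. x \<in> sphere 0 1 \<Longrightarrow> P (-x) = - P x"
    and v: "v $ 3 \<noteq> 0"
    and avoid: "\<And>x t. x \<in> sphere 0 1 \<Longrightarrow> x$3 = 0 \<Longrightarrow> x$4 = 0 \<Longrightarrow> P x \<noteq> t *\<^sub>R v"
  shows "\<exists>x\<in>sphere 0 1. P x = 0"
proof (rule ccontr)
  assume no_zero: "\<not> ?thesis"
  have "v \<noteq> 0"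
    using v by auto
  then obtain \<mu> where "\<mu> > 0"
    and off_line: "\<And>x t. x \<in> sphere 0 1 \<Longrightarrow> (x$3)^2 + (x$4)^2 < \<mu> \<Longrightarrow> P x \<noteq> t *\<^sub>R v"
    using neighbourhood_of_circle_avoiding_line [OF cont _ avoid] by blast
  define \<phi> where "\<phi> x = max 0 (1 - ((x$3)^2 + (x$4)^2) / \<mu>)" for x :: "real^4"
  define G where "G x = P x - (\<phi> x * P x $ 3 / v $ 3) *\<^sub>R v" for x
  have G_nz: "G x \<noteq> 0" if x: "x \<in> sphere 0 1" for x
  proof (cases "\<phi> x = 0")
    case True
    then show ?thesis
      using no_zero x by (simp add: G_def)
  next
    case False
    then have "0 < 1 - ((x$3)^2 + (x$4)^2) / \<mu>"
      unfolding \<phi>_def by (metis max.absorb1 not_less)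
    then have "(x$3)^2 + (x$4)^2 < \<mu>"
      using \<open>\<mu> > 0\<close> by (simp add: field_simps)
    then show ?thesis
      using off_line [OF x] by (auto simp: G_def)
  qed
  have "\<exists>x\<in>sphere 0 1. G x = 0"
  proof (rule Borsuk_Ulam_flat_on_circle)
    show "continuous_on (sphere 0 1) G"
      unfolding G_def \<phi>_def using v \<open>\<mu> > 0\<close> by (intro continuous_intros cont) auto
    show "G (-x) = - G x" if "x \<in> sphere 0 1" for x
      using odd [OF that] by (simp add: G_def \<phi>_def algebra_simps)
    show "G x $ 3 = 0" if "x \<in> sphere 0 1" "x$3 = 0" "x$4 = 0" for x
      using that v by (simp add: G_def \<phi>_def)
  qed
  with G_nz show False
    by blast
qed

lemma Borsuk_Ulam_differentiable:
  fixes P :: "real^4 \<Rightarrow> real^3"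
  assumes diff: "\<And>x. P differentiable (at x)"
    and odd: "\<And>x. P (-x) = - P x"
  shows "\<exists>x\<in>sphere 0 1. P x = 0"
proof (cases "\<exists>x\<in>sphere 0 1. x$3 = 0 \<and> x$4 = 0 \<and> P x = 0")
  case True
  then show ?thesis
    by blast
next
  case False
  then have nz: "P x \<noteq> 0" if "x \<in> sphere 0 1" "x$3 = 0" "x$4 = 0" for x
    using that by blast
  obtain v where v: "v $ 3 \<noteq> 0"
    and avoid: "\<And>x t. x \<in> sphere 0 1 \<Longrightarrow> x$3 = 0 \<Longrightarrow> x$4 = 0 \<Longrightarrow> P x \<noteq> t *\<^sub>R v"
    by (rule exists_direction_avoiding_circle_image [of P]) (use diff nz in auto)
  have "continuous_on (sphere 0 1) P"
    using diff by (meson continuous_at_imp_continuous_on differentiable_imp_continuous_within)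
  then show ?thesis
    by (rule Borsuk_Ulam_avoiding_line [of P v]) (use odd v avoid in auto)
qed

lemma odd_polynomial_approximation:
  fixes F :: "'a::euclidean_space \<Rightarrow> 'b::euclidean_space"
  assumes "compact S" "continuous_on S F"
    and sym: "\<And>x. x \<in> S \<Longrightarrow> -x \<in> S"
    and odd: "\<And>x. x \<in> S \<Longrightarrow> F (-x) = - F x"
    and "e > 0"
  obtains P where "polynomial_function P" "\<And>x. P (-x) = - P x"
    and "\<And>x. x \<in> S \<Longrightarrow> norm (F x - P x) < e"
proof -
  obtain p where p: "polynomial_function p" "\<And>x. x \<in> S \<Longrightarrow> norm (F x - p x) < e"
    using Stone_Weierstrass_polynomial_function [OF assms(1,2,5)] by blast
  define P where "P x = (1/2) *\<^sub>R (p x - p (-x))" for x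
  have "polynomial_function (\<lambda>x. p (-x))"
    using polynomial_function_compose [OF polynomial_function_minus [OF polynomial_function_id] p(1)]
    by (simp add: o_def)
  then have "polynomial_function P"
    unfolding P_def using p(1) by (intro polynomial_function_cmul polynomial_function_diff)
  moreover have "P (-x) = - P x" for x
    by (simp add: P_def algebra_simps)
  moreover have "norm (F x - P x) < e" if "x \<in> S" for x
  proof -
    have "F x - P x = (1/2) *\<^sub>R ((F x - p x) - (F (-x) - p (-x)))"
      using odd [OF that] by (simp add: P_def algebra_simps flip: scaleR_2)
    then have "norm (F x - P x) \<le> (1/2) * (norm (F x - p x) + norm (F (-x) - p (-x)))"
      using norm_triangle_ineq4 [of "F x - p x" "F (-x) - p (-x)"] by simp
    also have "\<dots> < e"
      using p(2) [OF that] p(2) [OF sym [OF that]] by simp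
    finally show ?thesis .
  qed
  ultimately show thesis
    using that by blast
qed

theorem Borsuk_Ulam:
  fixes F :: "real^4 \<Rightarrow> real^3"
  assumes cont: "continuous_on (sphere 0 1) F"
    and odd: "\<And>x. x \<in> sphere 0 1 \<Longrightarrow> F (-x) = - F x"
  shows "\<exists>x\<in>sphere 0 1. F x = 0"
proof (rule ccontr)
  assume "\<not> ?thesis"
  then have nz: "F x \<noteq> 0" if "x \<in> sphere 0 1" for x
    using that by blast
  have "sphere (0::real^4) 1 \<noteq> {}"
    by simp
  then obtain x0 where x0: "x0 \<in> sphere 0 1" "\<And>y. y \<in> sphere 0 1 \<Longrightarrow> norm (F x0) \<le> norm (F y)"
    using continuous_attains_inf [OF compact_sphere _ continuous_on_norm [OF cont]] by blast
  have pos: "norm (F x0) > 0"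
    using nz [OF x0(1)] by simp
  obtain P where P: "polynomial_function P" "\<And>x. P (-x) = - P x"
    and close: "\<And>x. x \<in> sphere 0 1 \<Longrightarrow> norm (F x - P x) < norm (F x0)"
    by (rule odd_polynomial_approximation [of "sphere 0 1" F "norm (F x0)"])
      (use cont odd pos in auto)
  have "\<exists>x\<in>sphere 0 1. P x = 0"
    by (rule Borsuk_Ulam_differentiable) (use P in \<open>auto intro: differentiable_at_polynomial_function\<close>)
  then obtain x where x: "x \<in> sphere 0 1" "P x = 0"
    by blast
  then have "norm (F x) < norm (F x0)"
    using close [OF x(1)] by simp
  with x0(2) [OF x(1)] show False
    by simp
qed

section \<open>Rotations of unit quaternions\<close>

lemma matrix_inv_eq:
  fixes A :: "'a::semiring_1^'n^'n"
  assumes "A ** B = mat 1" "B ** A = mat 1"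
  shows "matrix_inv A = B"
proof -
  have inv: "A ** matrix_inv A = mat 1"
    unfolding matrix_inv_def using someI[of "\<lambda>B. A ** B = mat 1 \<and> B ** A = mat 1"] assms by blast
  have "matrix_inv A = (B ** A) ** matrix_inv A"
    by (simp add: assms)
  also have "\<dots> = B"
    by (simp add: matrix_mul_assoc [symmetric] inv)
  finally show ?thesis .
qed

lemma matrix_inv_orthogonal: "orthogonal_matrix Q \<Longrightarrow> matrix_inv Q = transpose Q"
  by (simp add: matrix_inv_eq orthogonal_matrix_def)

lemma continuous_on_vector3 [continuous_intros]:
  fixes f g h :: "'a::topological_space \<Rightarrow> 'b::real_normed_vector"
  assumes "continuous_on S f" "continuous_on S g" "continuous_on S h"
  shows "continuous_on S (\<lambda>x. vector [f x, g x, h x] :: 'b^3)"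
proof -
  have components: "continuous_on S (\<lambda>x. vector [f x, g x, h x] $ i)" for i :: 3
    using exhaust_3 [of i] assms by auto
  have "continuous_on S (\<lambda>x. (\<chi> i. vector [f x, g x, h x] $ i) :: 'b^3)"
    by (intro continuous_on_vec_lambda components)
  then show ?thesis
    by simp
qed

lemma RQ_nth:
  "RQ q $ 1 $ 1 = 1 - 2*(q$3)^2 - 2*(q$4)^2"
  "RQ q $ 1 $ 2 = 2*(q$2*q$3 - q$4*q$1)"
  "RQ q $ 1 $ 3 = 2*(q$2*q$4 + q$3*q$1)"
  "RQ q $ 2 $ 1 = 2*(q$2*q$3 + q$4*q$1)"
  "RQ q $ 2 $ 2 = 1 - 2*(q$2)^2 - 2*(q$4)^2"
  "RQ q $ 2 $ 3 = 2*(q$3*q$4 - q$2*q$1)"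
  "RQ q $ 3 $ 1 = 2*(q$2*q$4 - q$3*q$1)"
  "RQ q $ 3 $ 2 = 2*(q$3*q$4 + q$2*q$1)"
  "RQ q $ 3 $ 3 = 1 - 2*(q$2)^2 - 2*(q$3)^2"
  by (simp_all add: RQ_def Let_def)

lemma RQ_uminus [simp]: "RQ (-q) = RQ q"
  by (simp add: RQ_def Let_def)

lemma orthogonal_matrix_RQ:
  assumes "norm q = 1" shows "orthogonal_matrix (RQ q)"
  using assms unfolding orthogonal_matrix norm_eq_1_vec4
  by (simp add: vec_eq_iff forall_3 matrix_matrix_mult_def transpose_def mat_def sum_3 RQ_nth;
      Groebner_Basis.algebra)

lemma det_RQ: assumes "norm q = 1" shows "det (RQ q) = 1"
  using assms unfolding norm_eq_1_vec4 by (simp add: det_3 RQ_nth; Groebner_Basis.algebra)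

lemma RQ_in_SO3: "norm q = 1 \<Longrightarrow> RQ q \<in> SO3"
  by (simp add: SO3_def rotation_matrix_def orthogonal_matrix_RQ det_RQ)

lemma continuous_on_RQ: "continuous_on S RQ"
  unfolding RQ_def [abs_def] Let_def by (intro continuous_intros)

lemma trace_RQ_mult_transpose:
  assumes "norm q = 1" "norm p = 1"
  shows "trace (RQ q ** transpose (RQ p)) = 4 * (q \<bullet> p)^2 - 1"
  using assms unfolding norm_eq_1_vec4
  by (simp add: trace_def matrix_matrix_mult_def transpose_def inner_vec_def sum_3 sum_4 RQ_nth;
      Groebner_Basis.algebra)

lemma rot_dist_RQ_orthogonal:
  assumes "norm p = 1" "norm q = 1" "p \<bullet> q = 0"
  shows "rot_dist (RQ p) (RQ q) = pi"
  using assms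
  by (simp add: rot_dist_def matrix_inv_orthogonal orthogonal_matrix_RQ trace_RQ_mult_transpose inner_commute)

theorem theorem5:
  fixes f1 f2 f3 :: "real^3^3 \<Rightarrow> real^4"
  assumes "continuous_on SO3 f1" and "f1 ` SO3 \<subseteq> S3"
      and "continuous_on SO3 f2" and "f2 ` SO3 \<subseteq> S3"
      and "continuous_on SO3 f3" and "f3 ` SO3 \<subseteq> S3"
  shows "\<exists>R\<in>SO3. rot_dist R (RQ (f1 R)) = pi \<and> rot_dist R (RQ (f2 R)) = pi
                 \<and> rot_dist R (RQ (f3 R)) = pi"
proof -
  have RQ_sphere: "RQ ` sphere 0 1 \<subseteq> SO3"
    by (auto intro: RQ_in_SO3)
  define F where "F p = (vector [p \<bullet> f1 (RQ p), p \<bullet> f2 (RQ p), p \<bullet> f3 (RQ p)] :: real^3)" for p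
  have "continuous_on (sphere 0 1) (\<lambda>p. f (RQ p))" if "continuous_on SO3 f" for f :: "real^3^3 \<Rightarrow> real^4"
    by (rule continuous_on_compose2 [OF that continuous_on_RQ RQ_sphere])
  then have "continuous_on (sphere 0 1) F"
    unfolding F_def [abs_def] using assms(1,3,5) by (intro continuous_intros) auto
  moreover have "F (-p) = - F p" if "p \<in> sphere 0 1" for p
    by (simp add: F_def vec_eq_iff forall_3)
  ultimately have "\<exists>p\<in>sphere 0 1. F p = 0"
    by (rule Borsuk_Ulam)
  then obtain p where p: "p \<in> sphere 0 1" "F p = 0"
    by blast
  then have "RQ p \<in> SO3"
    using RQ_sphere by blast
  then have "norm (f (RQ p)) = 1" if "f ` SO3 \<subseteq> S3" for f
    using that by (auto simp: S3_def)
  moreover have "p \<bullet> f1 (RQ p) = 0" "p \<bullet> f2 (RQ p) = 0" "p \<bullet> f3 (RQ p) = 0"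
    using p(2) by (simp_all add: F_def vec_eq_iff forall_3)
  ultimately show ?thesis
    using assms(2,4,6) p(1) \<open>RQ p \<in> SO3\<close> by (auto intro!: rot_dist_RQ_orthogonal)
qed

end
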